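(* Let $d\geq 1$. For each $k\geq 1$ let $\{B_{k\ell}:\ell\geq 1\}$ be a set of basis functions, and for each $j\in\{1,\ldots,d\}$ and $k\geq1$ let $\{B_{jkr}:r\geq 1\}$ be a set of basis functions. Let $g:\mathbb{R}\to[0,1]$ be non-constant and Lipschitz continuous. Then for any continuous function $f:[0,1]^d\to\mathbb{R}$ and any constant $\epsilon>0$, there exist integers $p\geq 1$, $q_k\geq 1$, $q_{jk}\geq 1$ ($1\le j\le d$, $1\le k\le p$) and real numbers $c_{k\ell}, c_{jkr}, b_k, b$ such that $$\sup_{\mathbf{x}=(x_1,\ldots,x_d)\in[0,1]^d}\left|f(\mathbf{x})-\left(\sum_{k=1}^p\sum_{\ell=1}^{q_k}c_{k\ell}B_{k\ell}\Big(g\Big(\sum_{j=1}^d\sum_{r=1}^{q_{jk}}c_{jkr}B_{jkr}(x_j)+b_k\Big)\Big)+b\right)\right|<\epsilon.$$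
   Context: A set $\{B_r:[0,1]\to\mathbb{R}\,|\,r\geq1\}$ of functions is called a set of basis functions if for every continuous $\phi:[0,1]\to\mathbb{R}$ and every $\epsilon>0$ there exist $q\geq1$ and $c_1,\ldots,c_q,c\in\mathbb{R}$ with $\sup_{x\in[0,1]}|\phi(x)-(\sum_{r=1}^q c_rB_r(x)+c)|<\epsilon$ (e.g. $\{x^r\}$, $\{\cos(r\pi x)\}$). *)

theory Defs
  imports "HOL-Analysis.Analysis"
begin

text \<open>A family B r (r >= 1) of functions [0,1] -> R is a set of basis functions if every
continuous phi on [0,1] is uniformly approximable by finite linear combinations plus a constant.
"sup_{x in [0,1]} |...| < eps" is written as: some delta < eps bounds |...| on [0,1].\<close>
definition basis_functions :: "(nat \<Rightarrow> real \<Rightarrow> real) \<Rightarrow> bool" where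
  "basis_functions B \<longleftrightarrow>
     (\<forall>\<phi> :: real \<Rightarrow> real. \<forall>\<epsilon>>0. continuous_on {0..1} \<phi> \<longrightarrow>
        (\<exists>q::nat. q \<ge> 1 \<and> (\<exists>(c::nat \<Rightarrow> real) (c0::real).
           (\<exists>\<delta><\<epsilon>. \<forall>x\<in>{0..1}. \<bar>\<phi> x - ((\<Sum>r=1..q. c r * B r x) + c0)\<bar> \<le> \<delta>))))"

end

theory Submission
  imports Defs
begin

(* Stone-Weierstrass approximates f uniformly on the cube by finite sums of terms
   c * exp (\<Sum>j. u j (x$j)) with continuous u j, i.e. by continuous functions G of separable sums
   h x = \<Sum>j. u j (x$j), where |h| < H on the cube.
   Pick a chord of g whose slope is close to the supremum D > 0 of all chord slopes of g (or of -g);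
   since no chord is steeper than D, g is uniformly close to an affine map with nonzero slope on that
   segment.  Composing the clamped inverse of this affine map with s \<mapsto> G (2 H s - H) yields a
   continuous outer function \<phi> with \<phi> (g z) \<approx> G h whenever z is close to the point of the segment
   that corresponds to h; by the Lipschitz bound on g this is robust under perturbations of z.
   Finally the rescaled inner functions and \<phi> are replaced by their approximations in the
   given bases. *)

definition exp_sum :: "(real \<times> ('d::finite \<Rightarrow> real \<Rightarrow> real)) list \<Rightarrow> real^'d \<Rightarrow> real" where
  "exp_sum ts x = (\<Sum>(a, u)\<leftarrow>ts. a * exp (\<Sum>j\<in>UNIV. u j (x$j)))"

definition exp_terms_mult ::
    "(real \<times> ('d \<Rightarrow> real \<Rightarrow> real)) list \<Rightarrow> (real \<times> ('d \<Rightarrow> real \<Rightarrow> real)) list \<Rightarrow>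
     (real \<times> ('d \<Rightarrow> real \<Rightarrow> real)) list" where
  "exp_terms_mult ts ts' = [(a * b, \<lambda>j t. u j t + v j t). (a, u) \<leftarrow> ts, (b, v) \<leftarrow> ts']"

definition continuous_terms :: "(real \<times> ('d \<Rightarrow> real \<Rightarrow> real)) list \<Rightarrow> bool" where
  "continuous_terms ts \<longleftrightarrow> (\<forall>(a, u)\<in>set ts. \<forall>j. continuous_on UNIV (u j))"

lemma exp_sum_append: "exp_sum (ts @ ts') x = exp_sum ts x + exp_sum ts' x"
  by (simp add: exp_sum_def)

lemma exp_sum_mult: "exp_sum (exp_terms_mult ts ts') x = exp_sum ts x * exp_sum ts' x"
proof (induction ts)
  case (Cons t ts)
  obtain a u where t: "t = (a, u)" by fastforce
  have "exp_sum (map (\<lambda>(b, v). (a * b, \<lambda>j s. u j s + v j s)) ts') x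
        = a * exp (\<Sum>j\<in>UNIV. u j (x$j)) * exp_sum ts' x"
    unfolding exp_sum_def
    by (induction ts') (auto simp: sum.distrib exp_add algebra_simps)
  with Cons show ?case
    by (simp add: t exp_sum_def exp_terms_mult_def algebra_simps)
qed (simp add: exp_sum_def exp_terms_mult_def)

lemma continuous_on_exp_sum:
  assumes "continuous_terms ts"
  shows "continuous_on S (exp_sum ts)"
  using assms unfolding continuous_terms_def
proof (induction ts)
  case (Cons t ts)
  obtain a u where t: "t = (a, u)" by fastforce
  have "continuous_on S (\<lambda>x. u j (x$j))" for j
    using Cons.prems t
    by (auto intro: continuous_on_compose2[OF _ continuous_on_component[OF continuous_on_id]])
  then have "continuous_on S (\<lambda>x. a * exp (\<Sum>j\<in>UNIV. u j (x$j)))"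
    by (intro continuous_intros) auto
  with Cons show ?case
    unfolding exp_sum_def by (simp add: t continuous_on_add)
qed (simp add: exp_sum_def)

lemma continuous_terms_mult:
  "continuous_terms ts \<Longrightarrow> continuous_terms ts' \<Longrightarrow> continuous_terms (exp_terms_mult ts ts')"
  by (fastforce simp: continuous_terms_def exp_terms_mult_def intro!: continuous_on_add)

lemma exp_sum_dense:
  fixes f :: "real^'d::finite \<Rightarrow> real"
  assumes "continuous_on (cbox 0 1) f" "e > 0"
  shows "\<exists>ts. continuous_terms ts \<and> (\<forall>x\<in>cbox 0 1. \<bar>f x - exp_sum ts x\<bar> < e)"
proof -
  let ?P = "\<lambda>\<phi>. \<exists>ts. continuous_terms ts \<and> \<phi> = exp_sum ts"
  have "\<exists>\<phi>. ?P \<phi> \<and> (\<forall>x\<in>cbox 0 1. \<bar>f x - \<phi> x\<bar> < e)"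
  proof (rule Stone_Weierstrass_HOL)
    show "?P (\<lambda>x. c)" for c
      by (rule exI[of _ "[(c, \<lambda>j t. 0)]"]) (simp add: continuous_terms_def exp_sum_def fun_eq_iff)
    show "continuous_on (cbox 0 1) \<phi>" if "?P \<phi>" for \<phi>
      using that continuous_on_exp_sum by blast
    show "?P (\<lambda>x. \<phi> x + \<xi> x)" if H: "?P \<phi> \<and> ?P \<xi>" for \<phi> \<xi>
    proof -
      obtain ts ts' where "continuous_terms ts" "continuous_terms ts'" "\<phi> = exp_sum ts" "\<xi> = exp_sum ts'"
        using H by blast
      then show ?thesis
        by (intro exI[of _ "ts @ ts'"]) (auto simp: continuous_terms_def exp_sum_append)
    qed
    show "?P (\<lambda>x. \<phi> x * \<xi> x)" if H: "?P \<phi> \<and> ?P \<xi>" for \<phi> \<xi>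
    proof -
      obtain ts ts' where "continuous_terms ts" "continuous_terms ts'" "\<phi> = exp_sum ts" "\<xi> = exp_sum ts'"
        using H by blast
      then show ?thesis
        by (intro exI[of _ "exp_terms_mult ts ts'"]) (simp add: continuous_terms_mult exp_sum_mult fun_eq_iff)
    qed
    show "\<exists>\<phi>. ?P \<phi> \<and> \<phi> x \<noteq> \<phi> y" if "x \<in> cbox 0 1 \<and> y \<in> cbox 0 1 \<and> x \<noteq> y" for x y
    proof -
      from that obtain i where "x$i \<noteq> y$i" by (auto simp: vec_eq_iff)
      let ?ts = "[(1, \<lambda>j t. if j = i then t else 0)]"
      have "exp_sum ?ts z = exp (z$i)" for z
        by (simp add: exp_sum_def)
      moreover have "continuous_on UNIV (\<lambda>t::real. if j = i then t else 0)" for j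
        by (cases "j = i") simp_all
      then have "continuous_terms ?ts"
        by (simp add: continuous_terms_def)
      ultimately show ?thesis
        using \<open>x$i \<noteq> y$i\<close> by (intro exI[of _ "exp_sum ?ts"]) auto
    qed
    show "compact (cbox (0::real^'d) 1)" by simp
  qed (use assms in auto)
  then show ?thesis by blast
qed

lemma exp_sum_eq_indexed_sum:
  "exp_sum ts x = (\<Sum>k=1..length ts. fst (ts!(k-1)) * exp (\<Sum>j\<in>UNIV. snd (ts!(k-1)) j (x$j)))"
  by (simp add: exp_sum_def sum_list_sum_nth atLeast0LessThan sum.atLeast1_atMost_eq case_prod_beta)

lemma exp_sum_approximation:
  fixes f :: "real^'d::finite \<Rightarrow> real"
  assumes "continuous_on (cbox 0 1) f" "e > 0"
  shows "\<exists>p\<ge>1. \<exists>(c::nat \<Rightarrow> real) (u::nat \<Rightarrow> 'd \<Rightarrow> real \<Rightarrow> real).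
           (\<forall>k\<in>{1..p}. \<forall>j. continuous_on UNIV (u k j)) \<and>
           (\<forall>x\<in>cbox 0 1. \<bar>f x - (\<Sum>k=1..p. c k * exp (\<Sum>j\<in>UNIV. u k j (x$j)))\<bar> < e)"
proof -
  obtain ts where cont: "continuous_terms ts" and approx: "\<forall>x\<in>cbox 0 1. \<bar>f x - exp_sum ts x\<bar> < e"
    using exp_sum_dense[OF assms] by blast
  define ts' where "ts' = (0, \<lambda>j t. 0) # ts"
  have "continuous_terms ts'"
    using cont by (simp add: ts'_def continuous_terms_def)
  then have "continuous_on UNIV (snd (ts'!(k-1)) j)" if "k \<in> {1..length ts'}" for k j
  proof -
    have "ts'!(k-1) \<in> set ts'"
      using that by (intro nth_mem) auto
    with \<open>continuous_terms ts'\<close> show ?thesis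
      unfolding continuous_terms_def by (auto simp: case_prod_beta)
  qed
  moreover have "\<forall>x\<in>cbox 0 1. \<bar>f x - exp_sum ts' x\<bar> < e"
    using approx by (simp add: ts'_def exp_sum_def)
  moreover have "length ts' \<ge> 1"
    by (simp add: ts'_def)
  ultimately show ?thesis
    unfolding exp_sum_eq_indexed_sum
    by (intro exI[of _ "length ts'"] conjI exI[of _ "\<lambda>k. fst (ts'!(k-1))"] exI[of _ "\<lambda>k. snd (ts'!(k-1))"])
      auto
qed

lemma nearly_affine_below_max_slope:
  fixes g :: "real \<Rightarrow> real"
  assumes slope_le: "\<And>u v. u \<le> v \<Longrightarrow> g v - g u \<le> D * (v - u)"
    and "x \<le> y" and chord: "g y - g x \<ge> (D - \<eta> * D) * (y - x)" and s: "s \<in> {0..1}"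
  shows "\<bar>g (x + s * (y - x)) - g x - s * (D * (y - x))\<bar> \<le> \<eta> * (D * (y - x))"
proof -
  define z where "z = x + s * (y - x)"
  have "x \<le> z" "z \<le> y"
    using s \<open>x \<le> y\<close> mult_left_le_one_le[of "y - x" s] by (auto simp: z_def)
  then have "g z - g x \<le> D * (z - x)" "g y - g z \<le> D * (y - z)"
    using slope_le by auto
  moreover have "z - x = s * (y - x)" "y - z = (1 - s) * (y - x)"
    by (simp_all add: z_def algebra_simps)
  ultimately show ?thesis
    using chord unfolding z_def[symmetric] by (simp add: abs_le_iff algebra_simps)
qed

lemma lipschitz_increasing_nearly_affine_segment:
  fixes g :: "real \<Rightarrow> real"
  assumes lip: "L-lipschitz_on UNIV g" and "a < b" "g a < g b" and "\<eta> > 0"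
  shows "\<exists>x l \<Delta>. l > 0 \<and> \<Delta> > 0 \<and> (\<forall>s\<in>{0..1}. \<bar>g (x + s * l) - g x - s * \<Delta>\<bar> \<le> \<eta> * \<Delta>)"
proof -
  define slopes where "slopes = {(g v - g u) / (v - u) | u v. u < v}"
  have "bdd_above slopes"
  proof (rule bdd_aboveI)
    fix m assume "m \<in> slopes"
    then obtain u v where "u < v" "m = (g v - g u) / (v - u)"
      by (auto simp: slopes_def)
    moreover have "g v - g u \<le> L * (v - u)"
      using lipschitz_onD[OF lip, of v u] \<open>u < v\<close> by (simp add: dist_real_def)
    ultimately show "m \<le> L"
      by (simp add: divide_le_eq)
  qed
  define D where "D = Sup slopes"
  have slope_le: "g v - g u \<le> D * (v - u)" if "u \<le> v" for u v
  proof (cases "u = v")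
    case False
    with that have "u < v"
      by simp
    then have "(g v - g u) / (v - u) \<le> D"
      unfolding D_def using \<open>bdd_above slopes\<close> by (intro cSup_upper) (auto simp: slopes_def)
    with \<open>u < v\<close> show ?thesis
      by (simp add: divide_le_eq)
  qed simp
  have "0 < D * (b - a)"
    using slope_le[of a b] assms(2,3) by linarith
  with \<open>a < b\<close> have "D > 0"
    by (simp add: zero_less_mult_iff)
  then have "D - \<eta> * D < Sup slopes"
    using \<open>\<eta> > 0\<close> by (simp add: D_def)
  then obtain x y where "x < y" and "D - \<eta> * D < (g y - g x) / (y - x)"
    using less_cSup_iff[OF _ \<open>bdd_above slopes\<close>] \<open>a < b\<close> unfolding slopes_def by blast
  then have "g y - g x \<ge> (D - \<eta> * D) * (y - x)"
    by (simp add: pos_less_divide_eq less_imp_le)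
  with slope_le \<open>x < y\<close> have "\<forall>s\<in>{0..1}. \<bar>g (x + s * (y - x)) - g x - s * (D * (y - x))\<bar> \<le> \<eta> * (D * (y - x))"
    by (intro ballI nearly_affine_below_max_slope) auto
  with \<open>x < y\<close> \<open>D > 0\<close> show ?thesis
    by (intro exI[of _ x] exI[of _ "y - x"] exI[of _ "D * (y - x)"]) auto
qed

lemma lipschitz_nearly_affine_segment:
  fixes g :: "real \<Rightarrow> real"
  assumes lip: "L-lipschitz_on UNIV g" and "g a \<noteq> g b" and "\<eta> > 0"
  shows "\<exists>x l \<Delta>. l > 0 \<and> \<Delta> \<noteq> 0 \<and> (\<forall>s\<in>{0..1}. \<bar>g (x + s * l) - g x - s * \<Delta>\<bar> \<le> \<eta> * \<bar>\<Delta>\<bar>)"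
proof -
  obtain u v where "u < v" "g u \<noteq> g v"
    using \<open>g a \<noteq> g b\<close> by (metis linorder_neqE_linordered_idom)
  consider "g u < g v" | "- g u < - g v"
    using \<open>g u \<noteq> g v\<close> by linarith
  then show ?thesis
  proof cases
    case 1
    from lipschitz_increasing_nearly_affine_segment[OF lip \<open>u < v\<close> this \<open>\<eta> > 0\<close>] obtain x l \<Delta>
      where "l > 0" "\<Delta> > 0" "\<forall>s\<in>{0..1}. \<bar>g (x + s * l) - g x - s * \<Delta>\<bar> \<le> \<eta> * \<Delta>"
      by blast
    then show ?thesis
      by (intro exI[of _ x] exI[of _ l] exI[of _ \<Delta>]) auto
  next
    case 2
    from lipschitz_increasing_nearly_affine_segment[OF lipschitz_on_minus[OF lip] \<open>u < v\<close> 2 \<open>\<eta> > 0\<close>]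
    obtain x l \<Delta>
      where "l > 0" "\<Delta> > 0" "\<forall>s\<in>{0..1}. \<bar>- g (x + s * l) + g x - s * \<Delta>\<bar> \<le> \<eta> * \<Delta>"
      by auto
    then show ?thesis
      by (intro exI[of _ x] exI[of _ l] exI[of _ "- \<Delta>"]) (auto simp: abs_le_iff)
  qed
qed

lemma continuous_factor_through_lipschitz:
  fixes g F :: "real \<Rightarrow> real"
  assumes lip: "L-lipschitz_on UNIV g" and "g a \<noteq> g b"
    and F: "continuous_on {0..1} F" and "e > 0"
  shows "\<exists>x l \<tau> \<phi>. l > 0 \<and> \<tau> > 0 \<and> continuous_on UNIV \<phi> \<and>
           (\<forall>s\<in>{0..1}. \<forall>z. \<bar>z - (x + s * l)\<bar> \<le> \<tau> \<longrightarrow> \<bar>\<phi> (g z) - F s\<bar> < e)"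
proof -
  obtain \<delta> where "\<delta> > 0"
    and F_close: "\<forall>s\<in>{0..1}. \<forall>s'\<in>{0..1}. dist s' s < \<delta> \<longrightarrow> dist (F s') (F s) < e"
    using compact_uniformly_continuous[OF F compact_Icc, unfolded uniformly_continuous_on_def] \<open>e > 0\<close>
    by blast
  have "\<delta>/2 > 0"
    using \<open>\<delta> > 0\<close> by simp
  then obtain x l \<Delta> where "l > 0" "\<Delta> \<noteq> 0"
    and affine: "\<forall>s\<in>{0..1}. \<bar>g (x + s * l) - g x - s * \<Delta>\<bar> \<le> \<delta>/2 * \<bar>\<Delta>\<bar>"
    using lipschitz_nearly_affine_segment[OF lip \<open>g a \<noteq> g b\<close>] by blast
  \<comment> \<open>\<open>\<rho>\<close> inverts the affine approximation of \<open>g\<close>, clamped to \<open>[0,1]\<close>\<close>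
  define \<rho> where "\<rho> v = max 0 (min 1 ((v - g x) / \<Delta>))" for v
  define \<tau> where "\<tau> = \<delta> * \<bar>\<Delta>\<bar> / (2 * (L + 1))"
  have "L \<ge> 0"
    using lipschitz_on_nonneg[OF lip] .
  have "\<tau> > 0"
    using \<open>L \<ge> 0\<close> \<open>\<delta> > 0\<close> \<open>\<Delta> \<noteq> 0\<close> by (simp add: \<tau>_def)
  have "continuous_on UNIV (F \<circ> \<rho>)"
    unfolding \<rho>_def using \<open>\<Delta> \<noteq> 0\<close>
    by (intro continuous_on_compose continuous_intros continuous_on_subset[OF F]) auto
  moreover have "\<bar>F (\<rho> (g z)) - F s\<bar> < e" if s: "s \<in> {0..1}" and z: "\<bar>z - (x + s * l)\<bar> \<le> \<tau>" for s z
  proof -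
    have "\<bar>g z - g (x + s * l)\<bar> \<le> L * \<bar>z - (x + s * l)\<bar>"
      using lipschitz_onD[OF lip] by (simp add: dist_real_def)
    also have "\<dots> \<le> L * \<tau>"
      using z \<open>L \<ge> 0\<close> by (rule mult_left_mono)
    also have "\<dots> < (L + 1) * \<tau>"
      using \<open>\<tau> > 0\<close> by simp
    also have "\<dots> = \<delta>/2 * \<bar>\<Delta>\<bar>"
      using \<open>L \<ge> 0\<close> by (simp add: \<tau>_def field_simps)
    finally have "\<bar>g z - g (x + s * l)\<bar> < \<delta>/2 * \<bar>\<Delta>\<bar>" .
    moreover have "\<bar>g (x + s * l) - g x - s * \<Delta>\<bar> \<le> \<delta>/2 * \<bar>\<Delta>\<bar>"
      using affine s by blast
    ultimately have "\<bar>g z - g x - s * \<Delta>\<bar> < \<delta> * \<bar>\<Delta>\<bar>"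
      by linarith
    then have "\<bar>(g z - g x) / \<Delta> - s\<bar> < \<delta>"
      using \<open>\<Delta> \<noteq> 0\<close> by (simp add: abs_divide divide_simps)
    then have "\<bar>\<rho> (g z) - s\<bar> < \<delta>"
      using s by (auto simp: \<rho>_def max_def min_def)
    moreover have "\<rho> (g z) \<in> {0..1}"
      by (simp add: \<rho>_def)
    ultimately show ?thesis
      using F_close s by (simp add: dist_real_def)
  qed
  ultimately show ?thesis
    using \<open>l > 0\<close> \<open>\<tau> > 0\<close> by (intro exI[of _ x] exI[of _ l] exI[of _ \<tau>] exI[of _ "F \<circ> \<rho>"]) auto
qed

lemma basis_functionsD:
  assumes "basis_functions B" "continuous_on {0..1} \<phi>" "e > 0"
  shows "\<exists>q c c0. q \<ge> 1 \<and> (\<forall>t\<in>{0..1}. \<bar>\<phi> t - ((\<Sum>r=1..q. c r * B r t) + c0)\<bar> \<le> e)"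
proof -
  obtain q c c0 \<delta> where "q \<ge> 1" "\<delta> < e"
    and "\<forall>t\<in>{0..1}. \<bar>\<phi> t - ((\<Sum>r=1..q. c r * B r t) + c0)\<bar> \<le> \<delta>"
    using assms unfolding basis_functions_def by blast
  then show ?thesis
    by (intro exI[of _ q] exI[of _ c] exI[of _ c0]) force
qed

lemma separable_sum_bounded:
  fixes u :: "'d::finite \<Rightarrow> real \<Rightarrow> real"
  assumes "\<forall>j. continuous_on {0..1} (u j)"
  shows "\<exists>H>0. \<forall>x\<in>cbox 0 1. \<bar>\<Sum>j\<in>UNIV. u j (x$j)\<bar> < H"
proof -
  have "continuous_on (cbox 0 1) (\<lambda>x::real^'d. u j (x$j))" for j
    using assms by (intro continuous_on_compose2[OF _ continuous_on_component[OF continuous_on_id]])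
      (auto simp: mem_box_cart)
  then have "continuous_on (cbox 0 1) (\<lambda>x::real^'d. \<Sum>j\<in>UNIV. u j (x$j))"
    by (intro continuous_on_sum) auto
  then have "bounded ((\<lambda>x. \<Sum>j\<in>UNIV. u j (x$j)) ` cbox 0 1)"
    by (intro compact_imp_bounded compact_continuous_image) auto
  then obtain M where "\<forall>x\<in>cbox 0 1. \<bar>\<Sum>j\<in>UNIV. u j (x$j)\<bar> \<le> M"
    unfolding bounded_iff by auto
  then show ?thesis
    by (intro exI[of _ "\<bar>M\<bar> + 1"]) fastforce
qed

lemma separable_sum_basis_approximation:
  fixes Bj :: "'d::finite \<Rightarrow> nat \<Rightarrow> real \<Rightarrow> real" and \<psi> :: "'d \<Rightarrow> real \<Rightarrow> real"
  assumes "\<forall>j. basis_functions (Bj j)" and "\<forall>j. continuous_on {0..1} (\<psi> j)" and "\<tau> > 0"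
  shows "\<exists>qj cj c0. (\<forall>j. qj j \<ge> 1) \<and>
           (\<forall>x\<in>cbox 0 1. \<bar>(\<Sum>j\<in>UNIV. \<Sum>r=1..qj j. cj j r * Bj j r (x$j)) + c0 - (\<Sum>j\<in>UNIV. \<psi> j (x$j))\<bar> \<le> \<tau>)"
proof -
  define e where "e = \<tau> / CARD('d)"
  have "e > 0"
    using \<open>\<tau> > 0\<close> by (simp add: e_def)
  then have each: "\<forall>j. \<exists>q c c0. q \<ge> 1 \<and> (\<forall>t\<in>{0..1}. \<bar>\<psi> j t - ((\<Sum>r=1..q. c r * Bj j r t) + c0)\<bar> \<le> e)"
    using assms basis_functionsD by blast
  obtain qj cj c0 where "\<forall>j. qj j \<ge> 1"
    and approx: "\<forall>j. \<forall>t\<in>{0..1}. \<bar>\<psi> j t - ((\<Sum>r=1..qj j. cj j r * Bj j r t) + c0 j)\<bar> \<le> e"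
    using each[unfolded choice_iff] by blast
  have "\<bar>(\<Sum>j\<in>UNIV. \<Sum>r=1..qj j. cj j r * Bj j r (x$j)) + sum c0 UNIV - (\<Sum>j\<in>UNIV. \<psi> j (x$j))\<bar> \<le> \<tau>"
    if "x \<in> cbox 0 1" for x
  proof -
    have "\<bar>(\<Sum>j\<in>UNIV. \<Sum>r=1..qj j. cj j r * Bj j r (x$j)) + sum c0 UNIV - (\<Sum>j\<in>UNIV. \<psi> j (x$j))\<bar>
        = \<bar>\<Sum>j\<in>UNIV. \<psi> j (x$j) - ((\<Sum>r=1..qj j. cj j r * Bj j r (x$j)) + c0 j)\<bar>"
      by (simp add: sum.distrib sum_subtractf abs_minus_commute)
    also have "\<dots> \<le> (\<Sum>j\<in>UNIV. \<bar>\<psi> j (x$j) - ((\<Sum>r=1..qj j. cj j r * Bj j r (x$j)) + c0 j)\<bar>)"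
      by (rule sum_abs)
    also have "\<dots> \<le> CARD('d) * e"
      using approx that by (intro sum_bounded_above) (auto simp: mem_box_cart)
    also have "\<dots> = \<tau>"
      by (simp add: e_def)
    finally show ?thesis .
  qed
  with \<open>\<forall>j. qj j \<ge> 1\<close> show ?thesis
    by blast
qed

lemma ridge_function_approximation:
  fixes B :: "nat \<Rightarrow> real \<Rightarrow> real" and Bj :: "'d::finite \<Rightarrow> nat \<Rightarrow> real \<Rightarrow> real"
    and g G :: "real \<Rightarrow> real" and u :: "'d \<Rightarrow> real \<Rightarrow> real"
  assumes B: "basis_functions B" and Bj: "\<forall>j. basis_functions (Bj j)"
    and g_range: "\<forall>t. g t \<in> {0..1}" and "g a \<noteq> g b" and lip: "L-lipschitz_on UNIV g"
    and G: "continuous_on UNIV G" and u: "\<forall>j. continuous_on {0..1} (u j)" and "e > 0"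
  shows "\<exists>q c qj cj bk b. q \<ge> 1 \<and> (\<forall>j. qj j \<ge> 1) \<and>
           (\<forall>x\<in>cbox 0 1. \<bar>G (\<Sum>j\<in>UNIV. u j (x$j)) -
              ((\<Sum>l=1..q. c l * B l (g ((\<Sum>j\<in>UNIV. \<Sum>r=1..qj j. cj j r * Bj j r (x$j)) + bk))) + b)\<bar> \<le> e)"
proof -
  obtain H where "H > 0" and H: "\<forall>x\<in>cbox 0 1. \<bar>\<Sum>j\<in>UNIV. u j (x$j)\<bar> < H"
    using separable_sum_bounded[OF u] by blast
  define F where "F s = G (2 * H * s - H)" for s
  have "continuous_on {0..1} F"
    unfolding F_def by (intro continuous_on_compose2[OF G] continuous_intros) auto
  then obtain y l \<tau> \<phi> where "l > 0" "\<tau> > 0" "continuous_on UNIV \<phi>"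
    and outer: "\<forall>s\<in>{0..1}. \<forall>z. \<bar>z - (y + s * l)\<bar> \<le> \<tau> \<longrightarrow> \<bar>\<phi> (g z) - F s\<bar> < e/2"
    using continuous_factor_through_lipschitz[OF lip \<open>g a \<noteq> g b\<close>, of F "e/2"] \<open>e > 0\<close> by auto
  have inner_cont: "\<forall>j. continuous_on {0..1} (\<lambda>t. l / (2 * H) * u j t)"
    using u continuous_on_mult_left by blast
  obtain qj cj c0 where "\<forall>j. qj j \<ge> 1"
    and inner: "\<forall>x\<in>cbox 0 1. \<bar>(\<Sum>j\<in>UNIV. \<Sum>r=1..qj j. cj j r * Bj j r (x$j)) + c0 -
                               (\<Sum>j\<in>UNIV. l / (2 * H) * u j (x$j))\<bar> \<le> \<tau>"
    using separable_sum_basis_approximation[OF Bj inner_cont \<open>\<tau> > 0\<close>] by blast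
  obtain q c b where "q \<ge> 1"
    and approx_\<phi>: "\<forall>v\<in>{0..1}. \<bar>\<phi> v - ((\<Sum>r=1..q. c r * B r v) + b)\<bar> \<le> e/2"
    using basis_functionsD[OF B continuous_on_subset[OF \<open>continuous_on UNIV \<phi>\<close>], of "e/2"] \<open>e > 0\<close>
    by auto
  define bk where "bk = c0 + y + l/2"
  have "\<bar>G (\<Sum>j\<in>UNIV. u j (x$j)) -
          ((\<Sum>l=1..q. c l * B l (g ((\<Sum>j\<in>UNIV. \<Sum>r=1..qj j. cj j r * Bj j r (x$j)) + bk))) + b)\<bar> \<le> e"
    if x: "x \<in> cbox 0 1" for x
  proof -
    define h where "h = (\<Sum>j\<in>UNIV. u j (x$j))"
    define s where "s = h / (2 * H) + 1/2"
    define z where "z = (\<Sum>j\<in>UNIV. \<Sum>r=1..qj j. cj j r * Bj j r (x$j)) + bk"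
    have "s \<in> {0..1}"
      using H x \<open>H > 0\<close> by (auto simp: s_def h_def field_simps abs_less_iff)
    have "F s = G h"
      using \<open>H > 0\<close> by (simp add: F_def s_def field_simps)
    have "(\<Sum>j\<in>UNIV. l / (2 * H) * u j (x$j)) = s * l - l/2"
      using \<open>H > 0\<close> by (simp add: s_def h_def sum_distrib_left field_simps)
    then have "z - (y + s * l) =
        (\<Sum>j\<in>UNIV. \<Sum>r=1..qj j. cj j r * Bj j r (x$j)) + c0 - (\<Sum>j\<in>UNIV. l / (2 * H) * u j (x$j))"
      by (simp add: z_def bk_def algebra_simps)
    then have "\<bar>z - (y + s * l)\<bar> \<le> \<tau>"
      using inner x by simp
    then have "\<bar>\<phi> (g z) - F s\<bar> < e/2"
      using outer \<open>s \<in> {0..1}\<close> by blast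
    moreover have "\<bar>\<phi> (g z) - ((\<Sum>r=1..q. c r * B r (g z)) + b)\<bar> \<le> e/2"
      using approx_\<phi> g_range by blast
    ultimately show ?thesis
      using \<open>F s = G h\<close> unfolding h_def[symmetric] z_def[symmetric] by linarith
  qed
  with \<open>q \<ge> 1\<close> \<open>\<forall>j. qj j \<ge> 1\<close> show ?thesis
    by blast
qed

lemma unit_cube_eq_cbox: "{x::real^'n. \<forall>j. 0 \<le> x$j \<and> x$j \<le> 1} = cbox 0 1"
  by (auto simp: mem_box_cart)

lemma abs_sum_diff_le:
  fixes a b :: "'i \<Rightarrow> real" and d :: real
  assumes "\<forall>k\<in>K. \<bar>a k - b k\<bar> \<le> d"
  shows "\<bar>sum a K - sum b K\<bar> \<le> card K * d"
proof -
  have "\<bar>sum a K - sum b K\<bar> \<le> (\<Sum>k\<in>K. \<bar>a k - b k\<bar>)"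
    unfolding sum_subtractf[symmetric] by (rule sum_abs)
  also have "\<dots> \<le> card K * d"
    using assms by (intro sum_bounded_above) auto
  finally show ?thesis .
qed

lemma ridge_sum_approximation:
  fixes B :: "nat \<Rightarrow> nat \<Rightarrow> real \<Rightarrow> real" and Bj :: "'d::finite \<Rightarrow> nat \<Rightarrow> nat \<Rightarrow> real \<Rightarrow> real"
    and g :: "real \<Rightarrow> real" and G :: "nat \<Rightarrow> real \<Rightarrow> real" and u :: "nat \<Rightarrow> 'd \<Rightarrow> real \<Rightarrow> real"
  assumes hB: "\<forall>k\<ge>1. basis_functions (B k)" and hBj: "\<forall>j. \<forall>k\<ge>1. basis_functions (Bj j k)"
    and g01: "\<forall>t. g t \<in> {0..1}" and "g a \<noteq> g b" and lip: "L-lipschitz_on UNIV g"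
    and G: "\<forall>k\<in>{1..p}. continuous_on UNIV (G k)"
    and u: "\<forall>k\<in>{1..p}. \<forall>j. continuous_on {0..1} (u k j)" and "e > 0"
  shows "\<exists>q qj cl cj bk b. (\<forall>k\<in>{1..p}. q k \<ge> 1 \<and> (\<forall>j. qj j k \<ge> 1)) \<and>
           (\<forall>x\<in>cbox 0 1. \<bar>(\<Sum>k=1..p. G k (\<Sum>j\<in>UNIV. u k j (x$j))) -
              ((\<Sum>k=1..p. \<Sum>l=1..q k. cl k l *
                 B k l (g ((\<Sum>j\<in>UNIV. \<Sum>r=1..qj j k. cj j k r * Bj j k r (x$j)) + bk k))) + b)\<bar> \<le> e)"
proof -
  define d where "d = e / (p + 1)"
  have "d > 0"
    using \<open>e > 0\<close> by (simp add: d_def)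
  have "\<forall>k\<in>{1..p}. \<exists>qk ck qjk cjk bk bk0. qk \<ge> 1 \<and> (\<forall>j. qjk j \<ge> 1) \<and>
          (\<forall>x\<in>cbox 0 1. \<bar>G k (\<Sum>j\<in>UNIV. u k j (x$j)) -
             ((\<Sum>l=1..qk. ck l * B k l (g ((\<Sum>j\<in>UNIV. \<Sum>r=1..qjk j. cjk j r * Bj j k r (x$j)) + bk))) + bk0)\<bar> \<le> d)"
  proof
    fix k assume k: "k \<in> {1..p}"
    have Bk: "basis_functions (B k)" and Bjk: "\<forall>j. basis_functions (Bj j k)"
      using hB hBj k by auto
    show "\<exists>qk ck qjk cjk bk bk0. qk \<ge> 1 \<and> (\<forall>j. qjk j \<ge> 1) \<and>
          (\<forall>x\<in>cbox 0 1. \<bar>G k (\<Sum>j\<in>UNIV. u k j (x$j)) -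
             ((\<Sum>l=1..qk. ck l * B k l (g ((\<Sum>j\<in>UNIV. \<Sum>r=1..qjk j. cjk j r * Bj j k r (x$j)) + bk))) + bk0)\<bar> \<le> d)"
      using G u k by (intro ridge_function_approximation[OF Bk Bjk g01 \<open>g a \<noteq> g b\<close> lip _ _ \<open>d > 0\<close>]) auto
  qed
  then obtain q cl qj cj bk b0 where
    conds: "\<forall>k\<in>{1..p}. q k \<ge> 1 \<and> (\<forall>j. qj k j \<ge> 1)"
    and terms: "\<forall>k\<in>{1..p}. \<forall>x\<in>cbox 0 1. \<bar>G k (\<Sum>j\<in>UNIV. u k j (x$j)) -
             ((\<Sum>l=1..q k. cl k l * B k l (g ((\<Sum>j\<in>UNIV. \<Sum>r=1..qj k j. cj k j r * Bj j k r (x$j)) + bk k))) + b0 k)\<bar> \<le> d"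
    unfolding bchoice_iff by blast
  have "\<bar>(\<Sum>k=1..p. G k (\<Sum>j\<in>UNIV. u k j (x$j))) -
          ((\<Sum>k=1..p. \<Sum>l=1..q k. cl k l *
             B k l (g ((\<Sum>j\<in>UNIV. \<Sum>r=1..qj k j. cj k j r * Bj j k r (x$j)) + bk k))) + (\<Sum>k=1..p. b0 k))\<bar> \<le> e"
    if "x \<in> cbox 0 1" for x
  proof -
    have "\<bar>(\<Sum>k=1..p. G k (\<Sum>j\<in>UNIV. u k j (x$j))) -
          ((\<Sum>k=1..p. \<Sum>l=1..q k. cl k l *
             B k l (g ((\<Sum>j\<in>UNIV. \<Sum>r=1..qj k j. cj k j r * Bj j k r (x$j)) + bk k))) + (\<Sum>k=1..p. b0 k))\<bar>
        \<le> card {1..p} * d"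
      unfolding sum.distrib[symmetric] using terms that by (intro abs_sum_diff_le) auto
    also have "\<dots> \<le> e"
      using \<open>e > 0\<close> by (simp add: d_def field_simps)
    finally show ?thesis .
  qed
  with conds show ?thesis
    by (intro exI[of _ q] exI[of _ "\<lambda>j k. qj k j"] exI[of _ cl] exI[of _ "\<lambda>j k r. cj k j r"] exI[of _ bk]
        exI[of _ "\<Sum>k=1..p. b0 k"] conjI) auto
qed

theorem theorem1:
  fixes B :: "nat \<Rightarrow> nat \<Rightarrow> real \<Rightarrow> real"
    and Bj :: "'d::finite \<Rightarrow> nat \<Rightarrow> nat \<Rightarrow> real \<Rightarrow> real"
    and g :: "real \<Rightarrow> real"
    and f :: "real^'d \<Rightarrow> real"
    and \<epsilon> :: real
  assumes hB: "\<forall>k\<ge>1. basis_functions (B k)"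
    and hBj: "\<forall>j. \<forall>k\<ge>1. basis_functions (Bj j k)"
    and g_range: "\<forall>t. 0 \<le> g t \<and> g t \<le> 1"
    and g_nonconst: "\<exists>s t. g s \<noteq> g t"
    and g_lip: "\<exists>L. L-lipschitz_on UNIV g"
    and f_cont: "continuous_on {x. \<forall>j. 0 \<le> x$j \<and> x$j \<le> 1} f"
    and eps: "\<epsilon> > 0"
  shows "\<exists>p::nat. p \<ge> 1 \<and> (\<exists>(q::nat \<Rightarrow> nat) (qj::'d \<Rightarrow> nat \<Rightarrow> nat)
           (c::nat \<Rightarrow> nat \<Rightarrow> real) (cj::'d \<Rightarrow> nat \<Rightarrow> nat \<Rightarrow> real)
           (bk::nat \<Rightarrow> real) (b::real).
         (\<forall>k\<in>{1..p}. q k \<ge> 1 \<and> (\<forall>j. qj j k \<ge> 1)) \<and>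
         (\<exists>\<delta><\<epsilon>. \<forall>x\<in>{x. \<forall>j. 0 \<le> x$j \<and> x$j \<le> 1}.
            \<bar>f x - ((\<Sum>k=1..p. \<Sum>l=1..q k. c k l *
                 B k l (g ((\<Sum>j\<in>UNIV. \<Sum>r=1..qj j k. cj j k r * Bj j k r (x$j)) + bk k))) + b)\<bar> \<le> \<delta>))"
proof -
  obtain L where lip: "L-lipschitz_on UNIV g"
    using g_lip by blast
  obtain s t where "g s \<noteq> g t"
    using g_nonconst by blast
  have "\<epsilon>/2 > 0" "\<epsilon>/4 > 0"
    using eps by simp_all
  obtain p :: nat and c u where "p \<ge> 1" and u: "\<forall>k\<in>{1..p}. \<forall>j. continuous_on UNIV (u k j)"
    and exp_approx: "\<forall>x\<in>cbox 0 1. \<bar>f x - (\<Sum>k=1..p. c k * exp (\<Sum>j\<in>UNIV. u k j (x$j)))\<bar> < \<epsilon>/2"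
    using exp_sum_approximation[OF f_cont[unfolded unit_cube_eq_cbox] \<open>\<epsilon>/2 > 0\<close>] by blast
  have g01: "\<forall>t. g t \<in> {0..1}"
    using g_range by simp
  have u01: "\<forall>k\<in>{1..p}. \<forall>j. continuous_on {0..1} (u k j)"
    using u continuous_on_subset by blast
  have exp_cont: "\<forall>k\<in>{1..p}. continuous_on UNIV (\<lambda>t. c k * exp t)"
    by (intro ballI continuous_intros)
  obtain q qj cl cj bk b where conds: "\<forall>k\<in>{1..p}. q k \<ge> 1 \<and> (\<forall>j. qj j k \<ge> 1)"
    and ridge_approx: "\<forall>x\<in>cbox 0 1. \<bar>(\<Sum>k=1..p. c k * exp (\<Sum>j\<in>UNIV. u k j (x$j))) -
              ((\<Sum>k=1..p. \<Sum>l=1..q k. cl k l *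
                 B k l (g ((\<Sum>j\<in>UNIV. \<Sum>r=1..qj j k. cj j k r * Bj j k r (x$j)) + bk k))) + b)\<bar> \<le> \<epsilon>/4"
    using ridge_sum_approximation[OF hB hBj g01 \<open>g s \<noteq> g t\<close> lip exp_cont u01 \<open>\<epsilon>/4 > 0\<close>] by blast
  have "\<bar>f x - ((\<Sum>k=1..p. \<Sum>l=1..q k. cl k l *
          B k l (g ((\<Sum>j\<in>UNIV. \<Sum>r=1..qj j k. cj j k r * Bj j k r (x$j)) + bk k))) + b)\<bar> \<le> 3/4 * \<epsilon>"
    if "x \<in> cbox 0 1" for x
    using exp_approx[rule_format, OF that] ridge_approx[rule_format, OF that] by linarith
  moreover have "3/4 * \<epsilon> < \<epsilon>"
    using eps by simp
  ultimately show ?thesis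
    unfolding unit_cube_eq_cbox using \<open>p \<ge> 1\<close> conds by blast
qed

end
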